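(* Let $0<\alpha\le \pi/4$ and let $\mathcal N_\alpha(\rho)=E_\alpha\rho E_\alpha^\dagger+D_\alpha\rho D_\alpha^\dagger$ on $\mathcal L(\mathbb C^3)$ with $E_\alpha=\sin\alpha\,|0\rangle\langle 1|+|1\rangle\langle 2|$ and $D_\alpha=\cos\alpha\,|2\rangle\langle 1|+|1\rangle\langle 0|$. Let $S=\mathrm{span}\{E^\dagger F: E,F\in\{E_\alpha,D_\alpha\}\}$ be its non-commutative graph. Then $$\tilde\vartheta(\mathcal N_\alpha):=\tilde\vartheta(S)=2+\cos^2\alpha+\cos^{-2}\alpha>4.$$
   Context: For a subspace $S\subseteq\mathcal L(A')$ (with $A\cong A'$, $|\Phi\rangle=\sum_i|i\rangle_A|i\rangle_{A'}$), the quantum Lovász number is the SDP value $\tilde\vartheta(S)=\max\{\langle\Phi|(\mathbb 1\otimes\rho+T)|\Phi\rangle:\ T\in S^\perp\otimes\mathcal L(A'),\ \mathrm{tr}\rho=1,\ \rho\ge0,\ \mathbb 1\otimes\rho+T\ge0\}$, where $S^\perp$ is the orthogonal complement of $S$ with respect to the Hilbert–Schmidt inner product. Equivalently (by strong duality) $\tilde\vartheta(S)=\min\{\|\mathrm{tr}_A Y\|_\infty:\ Y\in S\otimes\mathcal L(A'),\ Y\ge|\Phi\rangle\langle\Phi|\}$. *)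

theory Defs
  imports "HOL-Analysis.Analysis" "HOL-Library.Complex_Order"
begin

text \<open>Operators on a finite-dimensional Hilbert space with orthonormal basis indexed by 'n
  are represented as complex matrices of type complex^'n^'n (entry M$i$j = <i|M|j>).\<close>

definition cmat_scale :: "complex \<Rightarrow> complex^'n^'n \<Rightarrow> complex^'n^'n" where
  "cmat_scale c M = (\<chi> i j. c * M$i$j)"

definition adjoint :: "complex^'n^'n \<Rightarrow> complex^'n^'n" where
  "adjoint M = (\<chi> i j. cnj (M$j$i))"

definition ctrace :: "complex^'n^'n \<Rightarrow> complex" where
  "ctrace M = (\<Sum>i\<in>UNIV. M$i$i)"

definition hs_inner :: "complex^'n^'n \<Rightarrow> complex^'n^'n \<Rightarrow> complex" where
  "hs_inner X Y = ctrace (adjoint X ** Y)"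

definition hs_orth :: "(complex^'n^'n) set \<Rightarrow> (complex^'n^'n) set" where
  "hs_orth S = {X. \<forall>Y\<in>S. hs_inner Y X = 0}"

text \<open>Positive semidefinite: <x|M|x> \<ge> 0 (real and nonnegative) for all x.\<close>
definition psd :: "complex^'n^'n \<Rightarrow> bool" where
  "psd M \<longleftrightarrow> (\<forall>x::complex^'n. 0 \<le> (\<Sum>i\<in>UNIV. \<Sum>j\<in>UNIV. cnj (x$i) * M$i$j * x$j))"

definition tensor :: "complex^'n^'n \<Rightarrow> complex^'m^'m \<Rightarrow> complex^('n \<times> 'm)^('n \<times> 'm)" where
  "tensor A B = (\<chi> p q. A$(fst p)$(fst q) * B$(snd p)$(snd q))"

text \<open>Algebraic tensor product U \<otimes> V of subspaces of operators: all finite sums of simple tensors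
  (scalars are absorbed since U, V are subspaces).\<close>
definition tensor_space :: "(complex^'n^'n) set \<Rightarrow> (complex^'m^'m) set \<Rightarrow> (complex^('n \<times> 'm)^('n \<times> 'm)) set" where
  "tensor_space U V = {(\<Sum>k<m. tensor (X k) (Y k)) | (m::nat) X Y. \<forall>k<m. X k \<in> U \<and> Y k \<in> V}"

text \<open>Maximally entangled (unnormalised) vector |Phi> = sum_i |i>_A |i>_A'.\<close>
definition Phi :: "complex^('n::finite \<times> 'n)" where
  "Phi = (\<chi> p. if fst p = snd p then 1 else 0)"

definition expect :: "complex^'n \<Rightarrow> complex^'n^'n \<Rightarrow> complex" where
  "expect v M = (\<Sum>i\<in>UNIV. \<Sum>j\<in>UNIV. cnj (v$i) * M$i$j * v$j)"

text \<open>Quantum Lovasz number of a subspace S of L(A'), A = A' (the SDP value, as supremum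
  of the feasible objective values).\<close>
definition qlovasz :: "(complex^'n^'n) set \<Rightarrow> real" where
  "qlovasz S = Sup {Re (expect Phi (tensor (mat 1) \<rho> + T)) | \<rho> T.
      T \<in> tensor_space (hs_orth S) UNIV \<and> ctrace \<rho> = 1 \<and> psd \<rho> \<and> psd (tensor (mat 1) \<rho> + T)}"

definition ncgraph :: "(complex^'n^'n) set \<Rightarrow> (complex^'n^'n) set" where
  "ncgraph Ks = {(\<Sum>p\<in>Ks \<times> Ks. cmat_scale (c p) (adjoint (fst p) ** snd p)) | c. True}"

definition ketbra :: "'n \<Rightarrow> 'n \<Rightarrow> complex^'n^'n" where
  "ketbra a b = (\<chi> i j. if i = a \<and> j = b then 1 else 0)"

definition E_op :: "real \<Rightarrow> complex^3^3" where
  "E_op \<alpha> = cmat_scale (complex_of_real (sin \<alpha>)) (ketbra 0 1) + ketbra 1 2"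

definition D_op :: "real \<Rightarrow> complex^3^3" where
  "D_op \<alpha> = cmat_scale (complex_of_real (cos \<alpha>)) (ketbra 2 1) + ketbra 1 0"

end

theory Submission imports Defs begin

text \<open>Write \<open>c = cos\<^sup>2 \<alpha>\<close>, \<open>s = sin\<^sup>2 \<alpha>\<close> and \<open>L = 2 + c + 1/c\<close>. The Kraus products
  \<open>E\<^sup>\<dagger>E = s|1\<rangle>\<langle>1| + |2\<rangle>\<langle>2|\<close>, \<open>D\<^sup>\<dagger>D = c|1\<rangle>\<langle>1| + |0\<rangle>\<langle>0|\<close>, \<open>E\<^sup>\<dagger>D = |2\<rangle>\<langle>0|\<close>, \<open>D\<^sup>\<dagger>E = |0\<rangle>\<langle>2|\<close>
  make \<open>S\<^sup>\<perp>\<close> explicit: \<open>B\<^sub>0\<^sub>2 = B\<^sub>2\<^sub>0 = 0\<close>, \<open>B\<^sub>0\<^sub>0 + c B\<^sub>1\<^sub>1 = 0\<close>, \<open>s B\<^sub>1\<^sub>1 + B\<^sub>2\<^sub>2 = 0\<close>.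
  The value \<open>L\<close> is attained by \<open>\<rho> = diag(c, 1, 0)/(1 + c)\<close> together with
  \<open>T = diag(-c, 1, -s) \<otimes> W + |0\<rangle>\<langle>1| \<otimes> |0\<rangle>\<langle>1| + |1\<rangle>\<langle>0| \<otimes> |1\<rangle>\<langle>0|\<close>, where \<open>W\<close> is the diagonal
  matrix cancelling \<open>1 \<otimes> \<rho>\<close> on \<open>|01\<rangle>\<close> and \<open>|10\<rangle>\<close>; the resulting matrix is
  \<open>(1/c)|q\<rangle>\<langle>q|\<close> plus a nonnegative diagonal, with \<open>q = c|00\<rangle> + |11\<rangle>\<close>.
  Conversely \<open>L\<close> bounds every feasible value by weak duality: an explicit
  \<open>Y \<in> S \<otimes> L(A')\<close> with \<open>tr\<^sub>A Y = L\<cdot>1\<close> and \<open>Y - |\<Phi>\<rangle>\<langle>\<Phi>| \<ge> 0\<close> gives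
  \<open>\<langle>\<Phi>|X|\<Phi>\<rangle> \<le> tr(Y X) = L tr \<rho>\<close> for every feasible \<open>X = 1 \<otimes> \<rho> + T\<close>.\<close>

lemma UNIV_3_from_0: "(UNIV :: 3 set) = {0, 1, 2}"
  using UNIV_3 by auto

lemma sum_3_from_0: "sum f (UNIV :: 3 set) = f 0 + f 1 + f 2"
  unfolding UNIV_3_from_0 by (simp add: add.assoc)

lemma all_3_from_0: "(\<forall>i::3. P i) \<longleftrightarrow> P 0 \<and> P 1 \<and> P 2"
  by (metis UNIV_3_from_0 UNIV_I insertE singletonD)

lemma sum_3x3_from_0:
  "sum f (UNIV :: (3 \<times> 3) set) = f (0,0) + f (0,1) + f (0,2) + f (1,0) + f (1,1) + f (1,2)
     + f (2,0) + f (2,1) + f (2,2)"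
proof -
  have "sum f (UNIV :: (3 \<times> 3) set) = (\<Sum>a\<in>(UNIV :: 3 set). \<Sum>b\<in>(UNIV :: 3 set). f (a, b))"
    unfolding UNIV_Times_UNIV[symmetric] sum.cartesian_product by simp
  then show ?thesis by (simp add: sum_3_from_0 algebra_simps)
qed

lemma all_3x3_from_0:
  "(\<forall>p::3 \<times> 3. P p) \<longleftrightarrow> P (0,0) \<and> P (0,1) \<and> P (0,2) \<and> P (1,0) \<and> P (1,1) \<and> P (1,2)
     \<and> P (2,0) \<and> P (2,1) \<and> P (2,2)"
  by (simp only: split_paired_All all_3_from_0) blast

lemma ketbra_nth [simp]: "ketbra a b $ i $ j = (if i = a \<and> j = b then 1 else 0)"
  by (simp add: ketbra_def)

lemma cmat_scale_nth [simp]: "cmat_scale c M $ i $ j = c * M $ i $ j"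
  by (simp add: cmat_scale_def)

lemma adjoint_nth [simp]: "adjoint M $ i $ j = cnj (M $ j $ i)"
  by (simp add: adjoint_def)

lemma tensor_nth [simp]: "tensor A B $ p $ q = A $ fst p $ fst q * B $ snd p $ snd q"
  by (simp add: tensor_def)

lemma cmat_scale_1 [simp]: "cmat_scale 1 M = M"
  by (simp add: vec_eq_iff)

lemma cmat_scale_0 [simp]: "cmat_scale 0 M = 0"
  by (simp add: vec_eq_iff)

lemma mat_nth [simp]: "(mat k :: 'a::zero^'n^'n) $ i $ j = (if i = j then k else 0)"
  by (simp add: mat_def)

lemma psd_iff_expect_nonneg: "psd M \<longleftrightarrow> (\<forall>x. 0 \<le> expect x M)"
  unfolding psd_def expect_def by simp

lemma expect_axis: "expect (axis p 1) M = M $ p $ p"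
proof -
  have "(x::complex) * (if b then 1 else 0) = (if b then x else 0)"
    "cnj (if b then 1 else 0) * (x::complex) = (if b then x else 0)" for x b
    by simp_all
  then show ?thesis
    unfolding expect_def axis_def by (simp add: sum.delta)
qed

lemma psd_diagonal_nonneg: "psd M \<Longrightarrow> 0 \<le> M $ p $ p"
  by (metis expect_axis psd_iff_expect_nonneg)

lemma of_real_mult_nonneg: "0 \<le> r \<Longrightarrow> 0 \<le> z \<Longrightarrow> 0 \<le> complex_of_real r * z"
  by (rule mult_nonneg_nonneg) (simp_all add: less_eq_complex_def)

lemma cnj_mult_self_nonneg: "0 \<le> cnj z * z"
  by (simp add: less_eq_complex_def)

lemma hs_inner_eq_sum: "hs_inner Y B = (\<Sum>i\<in>UNIV. \<Sum>j\<in>UNIV. cnj (Y $ i $ j) * B $ i $ j)"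
proof -
  have "hs_inner Y B = (\<Sum>i\<in>UNIV. \<Sum>j\<in>UNIV. cnj (Y $ j $ i) * B $ j $ i)"
    unfolding hs_inner_def ctrace_def by (simp add: matrix_matrix_mult_def)
  also have "\<dots> = (\<Sum>j\<in>UNIV. \<Sum>i\<in>UNIV. cnj (Y $ j $ i) * B $ j $ i)"
    by (rule sum.swap)
  finally show ?thesis .
qed

lemma hs_inner_zero_left [simp]: "hs_inner 0 B = 0"
  by (simp add: hs_inner_eq_sum)

lemma hs_inner_add_left: "hs_inner (A + C) B = hs_inner A B + hs_inner C B"
  by (simp add: hs_inner_eq_sum distrib_right sum.distrib)

lemma hs_inner_scale_left: "hs_inner (cmat_scale c A) B = cnj c * hs_inner A B"
  by (simp add: hs_inner_eq_sum sum_distrib_left mult.assoc)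

lemma hs_inner_sum_left:
  "finite P \<Longrightarrow> hs_inner (\<Sum>p\<in>P. f p) B = (\<Sum>p\<in>P. hs_inner (f p) B)"
  by (induction P rule: finite_induct) (simp_all add: hs_inner_add_left)

lemma adjoint_mult_in_ncgraph:
  assumes "finite Ks" "E \<in> Ks" "F \<in> Ks"
  shows "adjoint E ** F \<in> ncgraph Ks"
proof -
  let ?c = "\<lambda>p. if p = (E, F) then 1 else 0"
  have "(\<Sum>p\<in>Ks \<times> Ks. cmat_scale (?c p) (adjoint (fst p) ** snd p))
      = (\<Sum>p\<in>Ks \<times> Ks. if p = (E, F) then adjoint (fst p) ** snd p else 0)"
    by (rule sum.cong) auto
  also have "\<dots> = adjoint E ** F"
    using assms by (subst sum.delta) auto
  finally show ?thesis
    unfolding ncgraph_def mem_Collect_eq by (intro exI[where x = ?c] conjI TrueI) (rule sym)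
qed

lemma hs_orth_ncgraph_iff:
  assumes "finite Ks"
  shows "B \<in> hs_orth (ncgraph Ks) \<longleftrightarrow> (\<forall>E\<in>Ks. \<forall>F\<in>Ks. hs_inner (adjoint E ** F) B = 0)"
proof
  assume "B \<in> hs_orth (ncgraph Ks)"
  then show "\<forall>E\<in>Ks. \<forall>F\<in>Ks. hs_inner (adjoint E ** F) B = 0"
    using adjoint_mult_in_ncgraph[OF assms] unfolding hs_orth_def by blast
next
  assume orth: "\<forall>E\<in>Ks. \<forall>F\<in>Ks. hs_inner (adjoint E ** F) B = 0"
  have "hs_inner (\<Sum>p\<in>Ks \<times> Ks. cmat_scale (c p) (adjoint (fst p) ** snd p)) B = 0" for c
    using assms orth by (simp add: hs_inner_sum_left hs_inner_scale_left mem_Times_iff)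
  then show "B \<in> hs_orth (ncgraph Ks)"
    unfolding hs_orth_def ncgraph_def by blast
qed

section \<open>The orthogonal complement of the graph of the channel\<close>

lemma adjoint_E_op_mult_E_op:
  "adjoint (E_op a) ** E_op a = cmat_scale (complex_of_real ((sin a)\<^sup>2)) (ketbra 1 1) + ketbra 2 2"
  by (simp add: vec_eq_iff all_3_from_0 matrix_matrix_mult_def sum_3_from_0 E_op_def power2_eq_square)

lemma adjoint_D_op_mult_D_op:
  "adjoint (D_op a) ** D_op a = cmat_scale (complex_of_real ((cos a)\<^sup>2)) (ketbra 1 1) + ketbra 0 0"
  by (simp add: vec_eq_iff all_3_from_0 matrix_matrix_mult_def sum_3_from_0 D_op_def power2_eq_square)

lemma adjoint_E_op_mult_D_op: "adjoint (E_op a) ** D_op a = ketbra 2 0"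
  by (simp add: vec_eq_iff all_3_from_0 matrix_matrix_mult_def sum_3_from_0 D_op_def E_op_def)

lemma adjoint_D_op_mult_E_op: "adjoint (D_op a) ** E_op a = ketbra 0 2"
  by (simp add: vec_eq_iff all_3_from_0 matrix_matrix_mult_def sum_3_from_0 D_op_def E_op_def)

lemma hs_orth_ncgraph_E_D_iff:
  "B \<in> hs_orth (ncgraph {E_op a, D_op a}) \<longleftrightarrow>
    B $ 0 $ 2 = 0 \<and> B $ 2 $ 0 = 0 \<and> B $ 0 $ 0 + complex_of_real ((cos a)\<^sup>2) * B $ 1 $ 1 = 0
    \<and> complex_of_real ((sin a)\<^sup>2) * B $ 1 $ 1 + B $ 2 $ 2 = 0"
  by (simp add: hs_orth_ncgraph_iff adjoint_E_op_mult_E_op adjoint_D_op_mult_D_op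
      adjoint_E_op_mult_D_op adjoint_D_op_mult_E_op hs_inner_eq_sum sum_3_from_0) blast

lemma trig_bounds_upto_pi_quarter:
  assumes "0 < a" "a \<le> pi / 4"
  shows "0 < cos a" "0 < sin a" "(sin a)\<^sup>2 \<le> (cos a)\<^sup>2"
proof -
  show "0 < cos a" using assms by (intro cos_gt_zero_pi) (use pi_gt_zero in linarith)+
  show "0 < sin a" using assms by (intro sin_gt_zero) (use pi_gt_zero in linarith)+
  have "0 \<le> cos (2 * a)" using assms by (intro cos_ge_zero) (use pi_gt_zero in linarith)+
  then show "(sin a)\<^sup>2 \<le> (cos a)\<^sup>2" by (simp add: cos_double)
qed

section \<open>Upper bound by weak duality\<close>

lemma expect_Phi_3:
  "expect (Phi :: complex^(3 \<times> 3)) X =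
     X$(0,0)$(0,0) + X$(1,1)$(1,1) + X$(2,2)$(2,2) + X$(0,0)$(1,1) + X$(1,1)$(0,0)
   + X$(0,0)$(2,2) + X$(2,2)$(0,0) + X$(1,1)$(2,2) + X$(2,2)$(1,1)"
  unfolding expect_def Phi_def by (simp add: sum_3x3_from_0 algebra_simps)

text \<open>\<open>dual_pairing c s v u X = tr(Y X)\<close> for the dual witness
  \<open>Y = v|a\<rangle>\<langle>a| + v|01\<rangle>\<langle>01| + c v(|11\<rangle>\<langle>11| + |10\<rangle>\<langle>10|) + (u - v)|22\<rangle>\<langle>22| + s u|12\<rangle>\<langle>12|\<close>,
  \<open>a = |00\<rangle> + |22\<rangle>\<close>, which lies in \<open>S \<otimes> L(A')\<close> and has \<open>tr\<^sub>A Y = L\<cdot>1\<close> once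
  \<open>(1 + c) v = (1 + s) u = L\<close>.\<close>
definition dual_pairing :: "real \<Rightarrow> real \<Rightarrow> real \<Rightarrow> real \<Rightarrow> complex^(3 \<times> 3)^(3 \<times> 3) \<Rightarrow> complex" where
  "dual_pairing c s v u X =
     complex_of_real v * (X$(0,0)$(0,0) + X$(0,0)$(2,2) + X$(2,2)$(0,0) + X$(0,1)$(0,1))
   + complex_of_real (c * v) * (X$(1,1)$(1,1) + X$(1,0)$(1,0))
   + complex_of_real u * X$(2,2)$(2,2) + complex_of_real (s * u) * X$(1,2)$(1,2)"

lemma dual_pairing_add: "dual_pairing c s v u (X + X') = dual_pairing c s v u X + dual_pairing c s v u X'"
  unfolding dual_pairing_def by (simp add: algebra_simps)

lemma dual_pairing_sum: "dual_pairing c s v u (\<Sum>k<(m::nat). X k) = (\<Sum>k<m. dual_pairing c s v u (X k))"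
  by (induction m) (simp_all add: dual_pairing_add, simp add: dual_pairing_def)

lemma dual_pairing_tensor_eq_0:
  assumes "B$0$2 = 0" "B$2$0 = 0" "B$0$0 + complex_of_real c * B$1$1 = 0"
    "complex_of_real s * B$1$1 + B$2$2 = 0"
  shows "dual_pairing c s v u (tensor B Z) = 0"
proof -
  have "B$0$0 = - complex_of_real c * B$1$1" "B$2$2 = - complex_of_real s * B$1$1"
    using assms(3,4) by (simp_all add: eq_neg_iff_add_eq_0 add.commute)
  with assms(1,2) show ?thesis
    unfolding dual_pairing_def of_real_mult by (simp add: algebra_simps)
qed

lemma dual_pairing_tensor_one:
  "dual_pairing c s v u (tensor (mat 1) \<rho>) =
     complex_of_real ((1 + c) * v) * (\<rho>$0$0 + \<rho>$1$1) + complex_of_real ((1 + s) * u) * \<rho>$2$2"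
  unfolding dual_pairing_def by (simp add: algebra_simps)

text \<open>\<open>Y - |\<Phi>\<rangle>\<langle>\<Phi>|\<close> is \<open>(1/c)|q\<rangle>\<langle>q|\<close> plus a diagonal, with \<open>q = |00\<rangle> - c|11\<rangle> + |22\<rangle>\<close>.\<close>
definition slack_vec :: "real \<Rightarrow> complex^(3 \<times> 3)" where
  "slack_vec c = (\<chi> p. if p = (0,0) \<or> p = (2,2) then 1 else if p = (1,1) then - complex_of_real c else 0)"

lemma expect_slack_vec:
  "expect (slack_vec c) X = X$(0,0)$(0,0) + complex_of_real (c * c) * X$(1,1)$(1,1) + X$(2,2)$(2,2)
     - complex_of_real c * (X$(0,0)$(1,1) + X$(1,1)$(0,0)) + X$(0,0)$(2,2) + X$(2,2)$(0,0)
     - complex_of_real c * (X$(1,1)$(2,2) + X$(2,2)$(1,1))"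
  unfolding expect_def slack_vec_def by (simp add: sum_3x3_from_0 algebra_simps)

lemma dual_pairing_minus_expect_Phi:
  assumes "c \<noteq> 0" "v = 1 + 1 / c"
  shows "dual_pairing c s v u X - expect Phi X =
     complex_of_real (1 / c) * expect (slack_vec c) X + complex_of_real v * X$(0,1)$(0,1)
   + complex_of_real (c * v) * X$(1,0)$(1,0) + complex_of_real (s * u) * X$(1,2)$(1,2)
   + complex_of_real (u - v) * X$(2,2)$(2,2)"
proof -
  define ic where "ic = complex_of_real (1 / c)"
  have "ic * complex_of_real c = 1" "complex_of_real v = 1 + ic"
    using assms by (simp_all add: ic_def)
  then show ?thesis
    unfolding dual_pairing_def expect_Phi_3 expect_slack_vec of_real_mult of_real_diff
      ic_def[symmetric]
    by (simp add: algebra_simps) algebra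
qed

lemma expect_Phi_le_dual_pairing:
  assumes "psd X" "0 < c" "0 \<le> s" "v = 1 + 1 / c" "v \<le> u"
  shows "Re (expect Phi X) \<le> Re (dual_pairing c s v u X)"
proof -
  have "0 \<le> v"
    using assms(2,4) by simp
  moreover from this have "0 \<le> u" "0 \<le> c * v" "0 \<le> s * u"
    using assms(2,3,5) by simp_all
  moreover have "0 \<le> expect x X" "0 \<le> X $ p $ p" for x p
    using assms(1) by (simp_all add: psd_iff_expect_nonneg psd_diagonal_nonneg)
  moreover have "c \<noteq> 0"
    using assms(2) by simp
  note slack = dual_pairing_minus_expect_Phi[OF this assms(4)]
  ultimately have "0 \<le> dual_pairing c s v u X - expect Phi X"
    unfolding slack using assms(2,5) by (intro add_nonneg_nonneg of_real_mult_nonneg) simp_all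
  then show ?thesis
    by (simp add: less_eq_complex_def)
qed

lemma feasible_value_le:
  assumes a: "0 < a" "a \<le> pi / 4"
    and T: "T \<in> tensor_space (hs_orth (ncgraph {E_op a, D_op a})) UNIV"
    and tr: "ctrace \<rho> = 1" and psd: "psd (tensor (mat 1) \<rho> + T)"
  shows "Re (expect Phi (tensor (mat 1) \<rho> + T)) \<le> 2 + (cos a)\<^sup>2 + 1 / (cos a)\<^sup>2"
proof -
  define c where "c = (cos a)\<^sup>2"
  define s where "s = (sin a)\<^sup>2"
  define L where "L = 2 + c + 1 / c"
  define v where "v = 1 + 1 / c"
  define u where "u = L / (1 + s)"
  have "0 < c" "0 \<le> s" "s \<le> c"
    using trig_bounds_upto_pi_quarter[OF a] by (simp_all add: c_def s_def)
  have Lv: "(1 + c) * v = L"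
    using \<open>0 < c\<close> unfolding L_def v_def by (simp add: field_simps)
  have Lu: "(1 + s) * u = L"
    using \<open>0 \<le> s\<close> unfolding u_def by simp
  have "v = L / (1 + c)"
    using Lv \<open>0 < c\<close> by (simp add: field_simps)
  also have "\<dots> \<le> u"
    unfolding u_def L_def using \<open>0 < c\<close> \<open>0 \<le> s\<close> \<open>s \<le> c\<close> by (intro frac_le) simp_all
  finally have "v \<le> u" .
  obtain m :: nat and Bs Zs where T_sum: "T = (\<Sum>k<m. tensor (Bs k) (Zs k))"
    and Bs: "\<forall>k<m. Bs k \<in> hs_orth (ncgraph {E_op a, D_op a})"
    using T unfolding tensor_space_def mem_Collect_eq by blast
  have "dual_pairing c s v u T = 0"
    unfolding T_sum dual_pairing_sum using Bs
    by (intro sum.neutral ballI dual_pairing_tensor_eq_0)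
      (simp_all add: hs_orth_ncgraph_E_D_iff c_def s_def)
  moreover have "dual_pairing c s v u (tensor (mat 1) \<rho>) = complex_of_real L * ctrace \<rho>"
    unfolding dual_pairing_tensor_one Lv Lu ctrace_def sum_3_from_0 by (simp add: algebra_simps)
  ultimately have "Re (dual_pairing c s v u (tensor (mat 1) \<rho> + T)) = L"
    using tr by (simp add: dual_pairing_add)
  with expect_Phi_le_dual_pairing[OF psd \<open>0 < c\<close> \<open>0 \<le> s\<close> v_def \<open>v \<le> u\<close>] show ?thesis
    by (simp add: L_def c_def)
qed

section \<open>An optimal feasible point\<close>

definition diag3 :: "real \<Rightarrow> real \<Rightarrow> real \<Rightarrow> complex^3^3" where
  "diag3 a b d = (\<chi> i j. if i \<noteq> j then 0 else if i = 0 then complex_of_real a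
     else if i = 1 then complex_of_real b else complex_of_real d)"

lemma ctrace_diag3: "ctrace (diag3 a b d) = complex_of_real (a + b + d)"
  by (simp add: ctrace_def diag3_def sum_3_from_0)

lemma psd_diag3:
  assumes "0 \<le> a" "0 \<le> b" "0 \<le> d"
  shows "psd (diag3 a b d)"
  unfolding psd_iff_expect_nonneg
proof
  fix x :: "complex^3"
  have "expect x (diag3 a b d) = complex_of_real a * (cnj (x$0) * x$0)
      + complex_of_real b * (cnj (x$1) * x$1) + complex_of_real d * (cnj (x$2) * x$2)"
    by (simp add: expect_def diag3_def sum_3_from_0 algebra_simps)
  then show "0 \<le> expect x (diag3 a b d)"
    using assms by (simp add: add_nonneg_nonneg of_real_mult_nonneg cnj_mult_self_nonneg)
qed

definition primal_state :: "real \<Rightarrow> complex^3^3" where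
  "primal_state c = diag3 (c / (1 + c)) (1 / (1 + c)) 0"

definition primal_T :: "real \<Rightarrow> real \<Rightarrow> complex^(3 \<times> 3)^(3 \<times> 3)" where
  "primal_T c s = tensor (diag3 (- c) 1 (- s)) (diag3 (- (c / (1 + c))) (1 / (c * (1 + c))) 0)
     + tensor (ketbra 0 1) (ketbra 0 1) + tensor (ketbra 1 0) (ketbra 1 0)"

definition primal_matrix :: "real \<Rightarrow> real \<Rightarrow> complex^(3 \<times> 3)^(3 \<times> 3)" where
  "primal_matrix c s = (\<chi> p q.
     if p = q then
       (if p = (0,0) then complex_of_real c else if p = (1,1) then complex_of_real (1 / c)
        else if p = (2,0) then complex_of_real (c * (1 + s) / (1 + c))
        else if p = (2,1) then complex_of_real ((c - s) / (c * (1 + c))) else 0)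
     else if p = (0,0) \<and> q = (1,1) \<or> p = (1,1) \<and> q = (0,0) then 1 else 0)"

lemma primal_matrix_eq:
  assumes "0 < c"
  shows "tensor (mat 1) (primal_state c) + primal_T c s = primal_matrix c s"
proof -
  have "c / (1 + c) + c * c / (1 + c) = c" "1 / (1 + c) + 1 / (c * (1 + c)) = 1 / c"
    "c / (1 + c) + s * c / (1 + c) = c * (1 + s) / (1 + c)"
    "1 / (1 + c) - s / (c * (1 + c)) = (c - s) / (c * (1 + c))"
    using assms by (simp_all add: divide_simps) (simp_all add: algebra_simps)
  with assms show ?thesis
    unfolding vec_eq_iff all_3x3_from_0
    by (simp add: primal_state_def primal_T_def primal_matrix_def diag3_def
        flip: of_real_add of_real_mult del: of_real_minus of_real_divide of_real_diff)
qed

lemma psd_primal_matrix: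
  assumes "0 < c" "0 \<le> s" "s \<le> c"
  shows "psd (primal_matrix c s)"
  unfolding psd_iff_expect_nonneg
proof
  fix x :: "complex^(3 \<times> 3)"
  define y where "y = complex_of_real c * x$(0,0) + x$(1,1)"
  define ic where "ic = complex_of_real (1 / c)"
  have "ic * complex_of_real c = 1"
    using assms(1) by (simp add: ic_def)
  then have expansion: "expect x (primal_matrix c s) = ic * (cnj y * y)
      + complex_of_real (c * (1 + s) / (1 + c)) * (cnj (x$(2,0)) * x$(2,0))
      + complex_of_real ((c - s) / (c * (1 + c))) * (cnj (x$(2,1)) * x$(2,1))"
    unfolding expect_def sum_3x3_from_0 primal_matrix_def y_def ic_def[symmetric]
    by (simp add: algebra_simps) algebra
  have "0 \<le> ic"
    using assms(1) by (simp add: ic_def less_eq_complex_def)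
  then show "0 \<le> expect x (primal_matrix c s)"
    unfolding expansion using assms
    by (intro add_nonneg_nonneg mult_nonneg_nonneg[OF \<open>0 \<le> ic\<close>] of_real_mult_nonneg
        cnj_mult_self_nonneg) simp_all
qed

lemma expect_Phi_primal_matrix: "Re (expect Phi (primal_matrix c s)) = 2 + c + 1 / c"
  by (simp add: expect_Phi_3 primal_matrix_def)

lemma primal_state_trace_psd:
  assumes "0 < c"
  shows "ctrace (primal_state c) = 1" "psd (primal_state c)"
proof -
  have "c / (1 + c) + 1 / (1 + c) + 0 = 1"
    using assms by (simp add: add_divide_distrib[symmetric])
  then show "ctrace (primal_state c) = 1"
    unfolding primal_state_def ctrace_diag3 by simp
  show "psd (primal_state c)"
    unfolding primal_state_def using assms by (intro psd_diag3) simp_all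
qed

lemma primal_T_in_tensor_space:
  "primal_T ((cos a)\<^sup>2) ((sin a)\<^sup>2) \<in> tensor_space (hs_orth (ncgraph {E_op a, D_op a})) UNIV"
proof -
  define c where "c = (cos a)\<^sup>2"
  define s where "s = (sin a)\<^sup>2"
  define Bs :: "nat \<Rightarrow> complex^3^3" where
    "Bs k = (if k = 0 then diag3 (- c) 1 (- s) else if k = 1 then ketbra 0 1 else ketbra 1 0)" for k
  define Zs :: "nat \<Rightarrow> complex^3^3" where
    "Zs k = (if k = 0 then diag3 (- (c / (1 + c))) (1 / (c * (1 + c))) 0
       else if k = 1 then ketbra 0 1 else ketbra 1 0)" for k
  have "primal_T c s = (\<Sum>k<3. tensor (Bs k) (Zs k))"
    by (simp add: numeral_3_eq_3 primal_T_def Bs_def Zs_def add.assoc)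
  moreover have "Bs k \<in> hs_orth (ncgraph {E_op a, D_op a})" for k
    by (simp add: hs_orth_ncgraph_E_D_iff Bs_def diag3_def c_def s_def)
  ultimately show ?thesis
    unfolding c_def[symmetric] s_def[symmetric] tensor_space_def by blast
qed

lemma add_inverse_gt_2:
  fixes c :: real
  assumes "0 < c" "c \<noteq> 1"
  shows "2 < c + 1 / c"
proof -
  have "0 < (c - 1)\<^sup>2"
    using assms(2) by simp
  then have "2 * c < c * c + 1"
    by (simp add: power2_eq_square algebra_simps)
  then show ?thesis
    using assms(1) by (simp add: field_simps)
qed

theorem proposition2:
  fixes \<alpha> :: real
  assumes "0 < \<alpha>" and "\<alpha> \<le> pi / 4"
  shows "qlovasz (ncgraph {E_op \<alpha>, D_op \<alpha>}) = 2 + (cos \<alpha>)\<^sup>2 + 1 / (cos \<alpha>)\<^sup>2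
    \<and> 2 + (cos \<alpha>)\<^sup>2 + 1 / (cos \<alpha>)\<^sup>2 > 4"
proof
  define c where "c = (cos \<alpha>)\<^sup>2"
  define s where "s = (sin \<alpha>)\<^sup>2"
  have "0 < c" "0 < s" "s \<le> c" "s + c = 1"
    using trig_bounds_upto_pi_quarter[OF assms] by (simp_all add: c_def s_def)
  have feasible: "primal_T c s \<in> tensor_space (hs_orth (ncgraph {E_op \<alpha>, D_op \<alpha>})) UNIV"
    "ctrace (primal_state c) = 1" "psd (primal_state c)"
    "psd (tensor (mat 1) (primal_state c) + primal_T c s)"
    using primal_T_in_tensor_space[of \<alpha>, folded c_def s_def] primal_state_trace_psd[OF \<open>0 < c\<close>]
      psd_primal_matrix[of c s] \<open>0 < c\<close> \<open>0 < s\<close> \<open>s \<le> c\<close>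
    by (simp_all add: primal_matrix_eq)
  show "qlovasz (ncgraph {E_op \<alpha>, D_op \<alpha>}) = 2 + (cos \<alpha>)\<^sup>2 + 1 / (cos \<alpha>)\<^sup>2"
    unfolding qlovasz_def c_def[symmetric]
  proof (rule cSup_eq_maximum)
    show "2 + c + 1 / c \<in> {Re (expect Phi (tensor (mat 1) \<rho> + T)) | \<rho> T.
      T \<in> tensor_space (hs_orth (ncgraph {E_op \<alpha>, D_op \<alpha>})) UNIV \<and> ctrace \<rho> = 1 \<and> psd \<rho>
      \<and> psd (tensor (mat 1) \<rho> + T)}"
      using feasible \<open>0 < c\<close> unfolding mem_Collect_eq
      by (intro exI[where x = "primal_state c"] exI[where x = "primal_T c s"])
        (simp add: primal_matrix_eq expect_Phi_primal_matrix)
  qed (use feasible_value_le[OF assms] in \<open>auto simp: c_def\<close>)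
  show "2 + (cos \<alpha>)\<^sup>2 + 1 / (cos \<alpha>)\<^sup>2 > 4"
    using add_inverse_gt_2[OF \<open>0 < c\<close>] \<open>0 < s\<close> \<open>s + c = 1\<close> unfolding c_def by simp
qed

end
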